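(* A graph is isomorphic to $KB(G)$ for some bipartite graph $G$ if and only if it is isomorphic to $H^2$ for some IIC-comparability graph $H$. That is, $KB(\text{bipartite})=(\text{IIC-comparability})^2$.
   Context: All graphs are finite and simple. A biclique of a graph $G$ is a set $P\subseteq V(G)$ such that the induced subgraph $G[P]$ is a complete bipartite graph with both parts nonempty, and $P$ is inclusion-maximal with this property. The biclique graph $KB(G)$ has the set of bicliques of $G$ as vertex set, two distinct bicliques being adjacent iff they intersect. For a graph $H$, the square $H^2$ has vertex set $V(H)$, two distinct vertices being adjacent iff their distance in $H$ is at most $2$. For a poset $\mathcal{P}=(C,\le)$ and $x\in C$, let $I^-_{\mathcal{P}}(x)=\{y\in C: y\le x\}$ and $I^+_{\mathcal{P}}(x)=\{y\in C: x\le y\}$; $\mathcal{P}$ is interval intersection closed (IIC) if for all $u,v\in C$: whenever $I^-_{\mathcal{P}}(u)\cap I^-_{\mathcal{P}}(v)\neq\emptyset$ there is $w\in C$ with $I^-_{\mathcal{P}}(w)=I^-_{\mathcal{P}}(u)\cap I^-_{\mathcal{P}}(v)$, and whenever $I^+_{\mathcal{P}}(u)\cap I^+_{\mathcal{P}}(v)\neq\emptyset$ there is $w\in C$ with $I^+_{\mathcal{P}}(w)=I^+_{\mathcal{P}}(u)\cap I^+_{\mathcal{P}}(v)$. The comparability graph of a poset $(C,\le)$ has vertex set $C$, two distinct elements adjacent iff they are comparable. A graph is IIC-comparability if it is the comparability graph of some (finite) IIC poset. *)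

theory Defs
  imports Main
begin

text \<open>A finite simple graph: vertex set and a symmetric irreflexive edge relation
  (as a set of ordered pairs) on the vertex set.\<close>
type_synonym 'a ugraph = "'a set \<times> ('a \<times> 'a) set"

definition verts :: "'a ugraph \<Rightarrow> 'a set" where "verts G = fst G"
definition edges :: "'a ugraph \<Rightarrow> ('a \<times> 'a) set" where "edges G = snd G"
definition adj :: "'a ugraph \<Rightarrow> 'a \<Rightarrow> 'a \<Rightarrow> bool" where "adj G x y \<longleftrightarrow> (x, y) \<in> edges G"

definition wf_graph :: "'a ugraph \<Rightarrow> bool" where
  "wf_graph G \<longleftrightarrow> finite (verts G) \<and> edges G \<subseteq> verts G \<times> verts G
     \<and> (\<forall>x y. adj G x y \<longrightarrow> adj G y x) \<and> (\<forall>x. \<not> adj G x x)"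

definition bipartite :: "'a ugraph \<Rightarrow> bool" where
  "bipartite G \<longleftrightarrow> (\<exists>A B. A \<inter> B = {} \<and> A \<union> B = verts G
     \<and> (\<forall>x y. adj G x y \<longrightarrow> (x \<in> A \<and> y \<in> B) \<or> (x \<in> B \<and> y \<in> A)))"

definition complete_bip_set :: "'a ugraph \<Rightarrow> 'a set \<Rightarrow> bool" where
  "complete_bip_set G P \<longleftrightarrow> P \<subseteq> verts G \<and> (\<exists>X Y. X \<noteq> {} \<and> Y \<noteq> {} \<and> X \<inter> Y = {} \<and> X \<union> Y = P
     \<and> (\<forall>x\<in>X. \<forall>y\<in>Y. adj G x y)
     \<and> (\<forall>x\<in>X. \<forall>x'\<in>X. \<not> adj G x x')
     \<and> (\<forall>y\<in>Y. \<forall>y'\<in>Y. \<not> adj G y y'))"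

definition biclique :: "'a ugraph \<Rightarrow> 'a set \<Rightarrow> bool" where
  "biclique G P \<longleftrightarrow> complete_bip_set G P \<and> (\<forall>Q. complete_bip_set G Q \<and> P \<subseteq> Q \<longrightarrow> Q = P)"

definition KB :: "'a ugraph \<Rightarrow> 'a set ugraph" where
  "KB G = ({P. biclique G P},
           {(P, Q). biclique G P \<and> biclique G Q \<and> P \<noteq> Q \<and> P \<inter> Q \<noteq> {}})"

definition square :: "'a ugraph \<Rightarrow> 'a ugraph" where
  "square H = (verts H,
     {(x, y). x \<in> verts H \<and> y \<in> verts H \<and> x \<noteq> y \<and>
        (adj H x y \<or> (\<exists>z \<in> verts H. adj H x z \<and> adj H z y))})"

definition graph_iso :: "'a ugraph \<Rightarrow> 'b ugraph \<Rightarrow> bool" where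
  "graph_iso G H \<longleftrightarrow> (\<exists>f. bij_betw f (verts G) (verts H) \<and>
     (\<forall>x\<in>verts G. \<forall>y\<in>verts G. adj G x y \<longleftrightarrow> adj H (f x) (f y)))"

definition finite_poset :: "'a set \<Rightarrow> ('a \<Rightarrow> 'a \<Rightarrow> bool) \<Rightarrow> bool" where
  "finite_poset C le \<longleftrightarrow> finite C
     \<and> (\<forall>x y. le x y \<longrightarrow> x \<in> C \<and> y \<in> C)
     \<and> (\<forall>x\<in>C. le x x)
     \<and> (\<forall>x y. le x y \<and> le y x \<longrightarrow> x = y)
     \<and> (\<forall>x y z. le x y \<and> le y z \<longrightarrow> le x z)"

definition down_int :: "'a set \<Rightarrow> ('a \<Rightarrow> 'a \<Rightarrow> bool) \<Rightarrow> 'a \<Rightarrow> 'a set" where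
  "down_int C le x = {y \<in> C. le y x}"

definition up_int :: "'a set \<Rightarrow> ('a \<Rightarrow> 'a \<Rightarrow> bool) \<Rightarrow> 'a \<Rightarrow> 'a set" where
  "up_int C le x = {y \<in> C. le x y}"

definition IIC :: "'a set \<Rightarrow> ('a \<Rightarrow> 'a \<Rightarrow> bool) \<Rightarrow> bool" where
  "IIC C le \<longleftrightarrow> (\<forall>u\<in>C. \<forall>v\<in>C.
     (down_int C le u \<inter> down_int C le v \<noteq> {} \<longrightarrow>
        (\<exists>w\<in>C. down_int C le w = down_int C le u \<inter> down_int C le v)) \<and>
     (up_int C le u \<inter> up_int C le v \<noteq> {} \<longrightarrow>
        (\<exists>w\<in>C. up_int C le w = up_int C le u \<inter> up_int C le v)))"

definition comparability_graph :: "'a set \<Rightarrow> ('a \<Rightarrow> 'a \<Rightarrow> bool) \<Rightarrow> 'a ugraph" where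
  "comparability_graph C le = (C, {(x, y). x \<in> C \<and> y \<in> C \<and> x \<noteq> y \<and> (le x y \<or> le y x)})"

definition IIC_comparability :: "'a ugraph \<Rightarrow> bool" where
  "IIC_comparability H \<longleftrightarrow> (\<exists>le. finite_poset (verts H) le \<and> IIC (verts H) le
     \<and> H = comparability_graph (verts H) le)"

end

theory Submission
  imports Defs
begin

text \<open>
  Let \<open>G\<close> be bipartite with sides \<open>A\<close> and \<open>B\<close>, and order its bicliques by inclusion of their
  \<open>A\<close>-sides; the \<open>B\<close>-sides are then ordered reversely, since each side of a biclique is the
  set of common neighbours of the other. Two bicliques meet iff they share a vertex of \<open>A\<close> or
  of \<open>B\<close>. The \<open>A\<close>-sides are the closed sets of the common-neighbour Galois connection, so
  two of them that intersect intersect in the \<open>A\<close>-side of a further biclique: a common lower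
  bound whose down-interval is the intersection of theirs. Dually for \<open>B\<close> and upper bounds.
  Hence the poset is interval intersection closed and \<open>KB(G)\<close> is the square of its
  comparability graph.

  Conversely, given an IIC poset take a lower and an upper copy of every element and join the
  lower copy of \<open>a\<close> to the upper copy of \<open>b\<close> whenever \<open>a \<le> b\<close>. Its bicliques are exactly the
  sets \<open>down(c) \<union> up(c)\<close> (the IIC property makes every biclique of this form), and two of them
  meet iff \<open>c\<close> and \<open>d\<close> have a common lower or upper bound, i.e. are adjacent in the square
  of the comparability graph.
\<close>

section \<open>Squares, comparability graphs and transport of posets\<close>

lemma graph_iso_trans:
  assumes "graph_iso G H" and "graph_iso H K"
  shows "graph_iso G K"
proof -
  obtain f where f: "bij_betw f (verts G) (verts H)"
    and f_adj: "\<forall>x\<in>verts G. \<forall>y\<in>verts G. adj G x y \<longleftrightarrow> adj H (f x) (f y)"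
    using assms(1) unfolding graph_iso_def by blast
  obtain g where g: "bij_betw g (verts H) (verts K)"
    and g_adj: "\<forall>x\<in>verts H. \<forall>y\<in>verts H. adj H x y \<longleftrightarrow> adj K (g x) (g y)"
    using assms(2) unfolding graph_iso_def by blast
  have "bij_betw (g \<circ> f) (verts G) (verts K)"
    using f g by (rule bij_betw_trans)
  moreover have "\<forall>x\<in>verts G. \<forall>y\<in>verts G. adj G x y \<longleftrightarrow> adj K ((g \<circ> f) x) ((g \<circ> f) y)"
    using f_adj g_adj bij_betw_apply[OF f] by simp
  ultimately show ?thesis
    unfolding graph_iso_def by blast
qed

lemma verts_square [simp]: "verts (square H) = verts H"
  by (simp add: verts_def square_def)

lemma adj_square:
  "adj (square H) x y \<longleftrightarrow> x \<in> verts H \<and> y \<in> verts H \<and> x \<noteq> y \<and>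
     (adj H x y \<or> (\<exists>z\<in>verts H. adj H x z \<and> adj H z y))"
  by (simp add: adj_def edges_def square_def verts_def)

lemma verts_KB: "verts (KB G) = {P. biclique G P}"
  by (simp add: KB_def verts_def)

lemma adj_KB: "adj (KB G) P Q \<longleftrightarrow> biclique G P \<and> biclique G Q \<and> P \<noteq> Q \<and> P \<inter> Q \<noteq> {}"
  by (simp add: KB_def adj_def edges_def)

lemma graph_iso_square:
  assumes "graph_iso G H"
  shows "graph_iso (square G) (square H)"
proof -
  obtain f where f: "bij_betw f (verts G) (verts H)"
    and f_adj: "\<forall>x\<in>verts G. \<forall>y\<in>verts G. adj G x y \<longleftrightarrow> adj H (f x) (f y)"
    using assms unfolding graph_iso_def by blast
  have image: "verts H = f ` verts G" and inj: "inj_on f (verts G)"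
    using f by (auto simp: bij_betw_def)
  have "adj (square G) x y \<longleftrightarrow> adj (square H) (f x) (f y)"
    if "x \<in> verts G" "y \<in> verts G" for x y
  proof -
    have "(\<exists>z\<in>verts G. adj G x z \<and> adj G z y) \<longleftrightarrow> (\<exists>z\<in>verts H. adj H (f x) z \<and> adj H z (f y))"
      using that f_adj unfolding image by blast
    moreover have "x \<noteq> y \<longleftrightarrow> f x \<noteq> f y"
      using that inj by (auto dest: inj_onD)
    ultimately show ?thesis
      using that f_adj image by (auto simp: adj_square)
  qed
  with f show ?thesis
    unfolding graph_iso_def by auto
qed

lemma verts_comparability_graph [simp]: "verts (comparability_graph C le) = C"
  by (simp add: verts_def comparability_graph_def)

lemma adj_comparability_graph:
  "adj (comparability_graph C le) x y \<longleftrightarrow> x \<in> C \<and> y \<in> C \<and> x \<noteq> y \<and> (le x y \<or> le y x)"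
  by (simp add: adj_def edges_def comparability_graph_def)

lemma wf_graph_comparability_graph:
  assumes "finite C"
  shows "wf_graph (comparability_graph C le)"
  using assms unfolding wf_graph_def
  by (auto simp: adj_comparability_graph) (auto simp: edges_def comparability_graph_def)

lemma up_int_eq_down_int_converse: "up_int C le = down_int C (\<lambda>x y. le y x)"
  by (simp add: fun_eq_iff up_int_def down_int_def)

text \<open>A path \<open>c - z - d\<close> in the comparability graph either passes through a common bound \<open>z\<close>
  of \<open>c\<close> and \<open>d\<close> or, by transitivity, makes them comparable, and then one of them is the bound.\<close>
lemma adj_square_comparability_graph:
  assumes "finite_poset C le" and "c \<in> C" and "d \<in> C"
  shows "adj (square (comparability_graph C le)) c d \<longleftrightarrow>
    c \<noteq> d \<and> (down_int C le c \<inter> down_int C le d \<noteq> {} \<or> up_int C le c \<inter> up_int C le d \<noteq> {})"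
proof -
  have refl: "\<And>x. x \<in> C \<Longrightarrow> le x x" and trans: "\<And>x y z. le x y \<Longrightarrow> le y z \<Longrightarrow> le x z"
    using assms(1) unfolding finite_poset_def by blast+
  have "(le c d \<or> le d c \<or> (\<exists>z\<in>C. (le c z \<or> le z c) \<and> (le z d \<or> le d z))) \<longleftrightarrow>
        (\<exists>z\<in>C. le z c \<and> le z d \<or> le c z \<and> le d z)"
    using assms(2,3) refl trans by meson
  then show ?thesis
    using assms(2,3) by (auto simp: adj_square adj_comparability_graph down_int_def up_int_def)
qed

definition has_down_meets :: "'a set \<Rightarrow> ('a \<Rightarrow> 'a \<Rightarrow> bool) \<Rightarrow> bool" where
  "has_down_meets C le \<longleftrightarrow> (\<forall>u\<in>C. \<forall>v\<in>C. down_int C le u \<inter> down_int C le v \<noteq> {} \<longrightarrow>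
     (\<exists>w\<in>C. down_int C le w = down_int C le u \<inter> down_int C le v))"

lemma IIC_iff_has_down_meets:
  "IIC C le \<longleftrightarrow> has_down_meets C le \<and> has_down_meets C (\<lambda>x y. le y x)"
  unfolding IIC_def has_down_meets_def up_int_eq_down_int_converse by blast

lemma has_down_meets_finite:
  assumes "has_down_meets C le" and "finite T" and "T \<noteq> {}" and "T \<subseteq> C"
    and "{a \<in> C. \<forall>b\<in>T. le a b} \<noteq> {}"
  shows "\<exists>w\<in>C. down_int C le w = {a \<in> C. \<forall>b\<in>T. le a b}"
  using assms(2-5)
proof (induction T rule: finite_ne_induct)
  case (singleton x)
  then show ?case by (auto simp: down_int_def)
next
  case (insert x T)
  then obtain w where w: "w \<in> C" "down_int C le w = {a \<in> C. \<forall>b\<in>T. le a b}"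
    by auto
  have meet: "down_int C le x \<inter> down_int C le w = {a \<in> C. \<forall>b\<in>insert x T. le a b}"
    using w(2) by (auto simp: down_int_def)
  have "x \<in> C"
    using insert.prems by simp
  with w(1) assms(1) insert.prems(2) show ?case
    unfolding has_down_meets_def meet[symmetric] by blast
qed

definition image_order :: "('a \<Rightarrow> 'b) \<Rightarrow> 'a set \<Rightarrow> ('a \<Rightarrow> 'a \<Rightarrow> bool) \<Rightarrow> 'b \<Rightarrow> 'b \<Rightarrow> bool" where
  "image_order f C le x y \<longleftrightarrow> (\<exists>a\<in>C. \<exists>b\<in>C. x = f a \<and> y = f b \<and> le a b)"

context
  fixes f :: "'a \<Rightarrow> 'b" and C :: "'a set"
  assumes inj: "inj_on f C"
begin

lemma image_order_image:
  "a \<in> C \<Longrightarrow> b \<in> C \<Longrightarrow> image_order f C le (f a) (f b) \<longleftrightarrow> le a b"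
  using inj by (auto simp: image_order_def dest: inj_onD)

lemma image_order_converse: "image_order f C (\<lambda>x y. le y x) = (\<lambda>x y. image_order f C le y x)"
  by (auto simp: fun_eq_iff image_order_def)

lemma down_int_image_order:
  "c \<in> C \<Longrightarrow> down_int (f ` C) (image_order f C le) (f c) = f ` down_int C le c"
  by (auto simp: down_int_def image_order_image)

lemma image_orderE:
  assumes "image_order f C le x y"
  obtains a b where "a \<in> C" "b \<in> C" "x = f a" "y = f b" "le a b"
  using assms unfolding image_order_def by blast

lemma finite_poset_image_order:
  assumes "finite_poset C le"
  shows "finite_poset (f ` C) (image_order f C le)"
proof -
  have fin: "finite C" and refl: "\<And>x. x \<in> C \<Longrightarrow> le x x"
    and antisym: "\<And>x y. le x y \<Longrightarrow> le y x \<Longrightarrow> x = y"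
    and trans: "\<And>x y z. le x y \<Longrightarrow> le y z \<Longrightarrow> le x z"
    using assms unfolding finite_poset_def by blast+
  have "\<forall>x y. image_order f C le x y \<longrightarrow> x \<in> f ` C \<and> y \<in> f ` C"
    by (auto elim: image_orderE)
  moreover have "\<forall>x\<in>f ` C. image_order f C le x x"
    using refl by (auto simp: image_order_image)
  moreover have "\<forall>x y. image_order f C le x y \<and> image_order f C le y x \<longrightarrow> x = y"
  proof (intro allI impI, elim conjE)
    fix x y assume xy: "image_order f C le x y" and yx: "image_order f C le y x"
    from xy obtain a b where ab: "a \<in> C" "b \<in> C" "x = f a" "y = f b" "le a b"
      by (rule image_orderE)
    with yx have "le b a"
      by (simp add: image_order_image)
    with ab show "x = y"
      using antisym by blast
  qed
  moreover have "\<forall>x y z. image_order f C le x y \<and> image_order f C le y z \<longrightarrow> image_order f C le x z"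
  proof (intro allI impI, elim conjE)
    fix x y z assume xy: "image_order f C le x y" and yz: "image_order f C le y z"
    from xy obtain a b where "a \<in> C" "b \<in> C" "x = f a" "y = f b" "le a b"
      by (rule image_orderE)
    moreover from yz obtain b' c where "b' \<in> C" "c \<in> C" "y = f b'" "z = f c" "le b' c"
      by (rule image_orderE)
    ultimately show "image_order f C le x z"
      using inj trans by (metis image_order_image inj_onD)
  qed
  ultimately show ?thesis
    using fin unfolding finite_poset_def by blast
qed

lemma has_down_meets_image_order:
  assumes "has_down_meets C le"
  shows "has_down_meets (f ` C) (image_order f C le)"
  unfolding has_down_meets_def
proof (intro ballI impI)
  fix u v assume "u \<in> f ` C" "v \<in> f ` C"
  then obtain a b where ab: "a \<in> C" "b \<in> C" and uv: "u = f a" "v = f b" by blast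
  have "down_int C le a \<subseteq> C" "down_int C le b \<subseteq> C"
    by (auto simp: down_int_def)
  then have image_Int: "down_int (f ` C) (image_order f C le) u \<inter> down_int (f ` C) (image_order f C le) v
      = f ` (down_int C le a \<inter> down_int C le b)"
    unfolding uv down_int_image_order[OF ab(1)] down_int_image_order[OF ab(2)]
    using inj by (simp add: inj_on_image_Int)
  assume "down_int (f ` C) (image_order f C le) u \<inter> down_int (f ` C) (image_order f C le) v \<noteq> {}"
  then obtain w where "w \<in> C" "down_int C le w = down_int C le a \<inter> down_int C le b"
    using assms ab unfolding image_Int has_down_meets_def by blast
  then show "\<exists>w\<in>f ` C. down_int (f ` C) (image_order f C le) w
      = down_int (f ` C) (image_order f C le) u \<inter> down_int (f ` C) (image_order f C le) v"
    unfolding image_Int by (metis down_int_image_order imageI)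
qed

lemma IIC_image_order:
  assumes "IIC C le"
  shows "IIC (f ` C) (image_order f C le)"
proof -
  have "has_down_meets (f ` C) (image_order f C le)"
    using assms unfolding IIC_iff_has_down_meets by (blast intro: has_down_meets_image_order)
  moreover have "has_down_meets (f ` C) (image_order f C (\<lambda>x y. le y x))"
    using assms unfolding IIC_iff_has_down_meets by (blast intro: has_down_meets_image_order)
  ultimately show ?thesis
    unfolding IIC_iff_has_down_meets image_order_converse[of le] by blast
qed

lemma graph_iso_comparability_graph_image_order:
  "graph_iso (comparability_graph C le) (comparability_graph (f ` C) (image_order f C le))"
  unfolding graph_iso_def
proof (intro exI conjI)
  show "bij_betw f (verts (comparability_graph C le)) (verts (comparability_graph (f ` C) (image_order f C le)))"
    using inj by (simp add: bij_betw_imageI)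
  show "\<forall>x\<in>verts (comparability_graph C le). \<forall>y\<in>verts (comparability_graph C le).
      adj (comparability_graph C le) x y \<longleftrightarrow>
      adj (comparability_graph (f ` C) (image_order f C le)) (f x) (f y)"
  proof (intro ballI)
    fix x y assume "x \<in> verts (comparability_graph C le)" "y \<in> verts (comparability_graph C le)"
    then have "x \<in> C" "y \<in> C" by simp_all
    moreover have "x \<noteq> y \<longleftrightarrow> f x \<noteq> f y"
      using calculation inj by (auto dest: inj_onD)
    ultimately show "adj (comparability_graph C le) x y \<longleftrightarrow>
        adj (comparability_graph (f ` C) (image_order f C le)) (f x) (f y)"
      by (simp add: adj_comparability_graph image_order_image)
  qed
qed

end

lemma IIC_comparability_graph_on_nat:
  assumes "finite_poset C le" and "IIC C le"
  obtains H :: "nat ugraph"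
  where "wf_graph H" "IIC_comparability H" "graph_iso (comparability_graph C le) H"
proof -
  have "finite C"
    using assms(1) unfolding finite_poset_def by blast
  then obtain f :: "'a \<Rightarrow> nat" where f: "inj_on f C"
    using finite_imp_inj_to_nat_seg by blast
  let ?H = "comparability_graph (f ` C) (image_order f C le)"
  have "wf_graph ?H"
    using \<open>finite C\<close> by (simp add: wf_graph_comparability_graph)
  moreover have "IIC_comparability ?H"
    unfolding IIC_comparability_def verts_comparability_graph
    using finite_poset_image_order[OF f assms(1)] IIC_image_order[OF f assms(2)] by blast
  ultimately show thesis
    using graph_iso_comparability_graph_image_order[OF f] by (rule that)
qed

section \<open>The poset of bicliques of a bipartite graph\<close>

definition common_nbrs :: "'a ugraph \<Rightarrow> 'a set \<Rightarrow> 'a set \<Rightarrow> 'a set" where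
  "common_nbrs G S T = {y \<in> T. \<forall>x\<in>S. adj G x y}"

lemma common_nbrs_antimono: "S \<subseteq> S' \<Longrightarrow> common_nbrs G S' T \<subseteq> common_nbrs G S T"
  unfolding common_nbrs_def by blast

lemma common_nbrs_Un: "common_nbrs G (S \<union> S') T = common_nbrs G S T \<inter> common_nbrs G S' T"
  unfolding common_nbrs_def by blast

definition side_order :: "'a ugraph \<Rightarrow> 'a set \<Rightarrow> 'a set \<Rightarrow> 'a set \<Rightarrow> bool" where
  "side_order G A P Q \<longleftrightarrow> biclique G P \<and> biclique G Q \<and> P \<inter> A \<subseteq> Q \<inter> A"

locale bipartite_graph =
  fixes G :: "'a ugraph" and A B :: "'a set"
  assumes wf: "wf_graph G"
    and sides_disjoint: "A \<inter> B = {}" and sides_cover: "A \<union> B = verts G"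
    and adj_sides: "adj G x y \<Longrightarrow> x \<in> A \<and> y \<in> B \<or> x \<in> B \<and> y \<in> A"
begin

lemma swap: "bipartite_graph G B A"
  using wf sides_disjoint sides_cover adj_sides by unfold_locales blast+

lemma adj_sym: "adj G x y \<Longrightarrow> adj G y x"
  using wf unfolding wf_graph_def by blast

lemma subset_common_nbrs_common_nbrs: "S \<subseteq> T' \<Longrightarrow> S \<subseteq> common_nbrs G (common_nbrs G S T) T'"
  unfolding common_nbrs_def using adj_sym by blast

lemma common_nbrs_triple:
  "S \<subseteq> T' \<Longrightarrow> common_nbrs G (common_nbrs G (common_nbrs G S T) T') T = common_nbrs G S T"
proof (rule subset_antisym)
  assume "S \<subseteq> T'"
  then show "common_nbrs G (common_nbrs G (common_nbrs G S T) T') T \<subseteq> common_nbrs G S T"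
    by (rule common_nbrs_antimono[OF subset_common_nbrs_common_nbrs])
  have "common_nbrs G S T \<subseteq> T"
    unfolding common_nbrs_def by blast
  then show "common_nbrs G S T \<subseteq> common_nbrs G (common_nbrs G (common_nbrs G S T) T') T"
    by (rule subset_common_nbrs_common_nbrs)
qed

lemma complete_bip_set_sides:
  assumes "complete_bip_set G Q"
  shows "Q \<subseteq> A \<union> B" and "Q \<inter> A \<noteq> {}" and "Q \<inter> B \<noteq> {}"
    and "\<forall>a\<in>Q \<inter> A. \<forall>b\<in>Q \<inter> B. adj G a b"
proof -
  obtain X Y where XY: "X \<noteq> {}" "Y \<noteq> {}" "X \<union> Y = Q" "\<forall>x\<in>X. \<forall>y\<in>Y. adj G x y"
    and Q: "Q \<subseteq> verts G"
    using assms unfolding complete_bip_set_def by blast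
  then obtain x y where xy: "x \<in> X" "y \<in> Y" "adj G x y" by blast
  have parts_in_sides: "X \<subseteq> A1 \<and> Y \<subseteq> B1"
    if "x \<in> A1" "y \<in> B1" "{A1, B1} = {A, B}" for A1 B1
  proof -
    have "A1 \<inter> B1 = {}" and "\<And>u v. adj G u v \<Longrightarrow> u \<in> A1 \<and> v \<in> B1 \<or> u \<in> B1 \<and> v \<in> A1"
      using that(3) sides_disjoint adj_sides by (auto simp: doubleton_eq_iff)
    then show ?thesis
      using that(1,2) XY(4) xy(1,2) by blast
  qed
  have "X \<subseteq> A \<and> Y \<subseteq> B \<or> X \<subseteq> B \<and> Y \<subseteq> A"
    using adj_sides[OF xy(3)] parts_in_sides[of A B] parts_in_sides[of B A] by blast
  then have "Q \<inter> A = X \<and> Q \<inter> B = Y \<or> Q \<inter> A = Y \<and> Q \<inter> B = X"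
    using XY(3) sides_disjoint by blast
  then show "Q \<inter> A \<noteq> {}" "Q \<inter> B \<noteq> {}"
    using XY(1,2) by auto
  from \<open>Q \<inter> A = X \<and> Q \<inter> B = Y \<or> Q \<inter> A = Y \<and> Q \<inter> B = X\<close>
  show "\<forall>a\<in>Q \<inter> A. \<forall>b\<in>Q \<inter> B. adj G a b"
    using XY(4) adj_sym by auto
  show "Q \<subseteq> A \<union> B"
    using Q sides_cover by blast
qed

lemma complete_bip_set_of_sides:
  assumes "S \<subseteq> A" "T \<subseteq> B" "S \<noteq> {}" "T \<noteq> {}" "\<forall>a\<in>S. \<forall>b\<in>T. adj G a b"
  shows "complete_bip_set G (S \<union> T)"
proof -
  have "\<forall>x\<in>S. \<forall>x'\<in>S. \<not> adj G x x'" and "\<forall>y\<in>T. \<forall>y'\<in>T. \<not> adj G y y'"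
    using assms(1,2) sides_disjoint adj_sides by blast+
  moreover have "S \<union> T \<subseteq> verts G" and "S \<inter> T = {}"
    using assms(1,2) sides_disjoint sides_cover by blast+
  ultimately show ?thesis
    unfolding complete_bip_set_def using assms(3-5) by blast
qed

lemma complete_bip_set_common_nbrs:
  assumes "complete_bip_set G Q"
  shows "Q \<inter> B \<subseteq> common_nbrs G (Q \<inter> A) B" and "Q \<inter> A \<subseteq> common_nbrs G (Q \<inter> B) A"
  using complete_bip_set_sides(4)[OF assms] adj_sym unfolding common_nbrs_def by blast+

lemma biclique_iff:
  "biclique G P \<longleftrightarrow> P \<subseteq> A \<union> B \<and> P \<inter> A \<noteq> {} \<and> P \<inter> B \<noteq> {}
     \<and> P \<inter> B = common_nbrs G (P \<inter> A) B \<and> P \<inter> A = common_nbrs G (P \<inter> B) A"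
proof
  assume P: "biclique G P"
  then have cbs: "complete_bip_set G P"
    and maximal: "\<And>Q. complete_bip_set G Q \<Longrightarrow> P \<subseteq> Q \<Longrightarrow> Q = P"
    unfolding biclique_def by blast+
  note sides = complete_bip_set_sides[OF cbs] and nbrs = complete_bip_set_common_nbrs[OF cbs]
  have sub: "common_nbrs G S T \<subseteq> T" for S T
    unfolding common_nbrs_def by blast
  have "complete_bip_set G (P \<inter> A \<union> common_nbrs G (P \<inter> A) B)"
  proof (rule complete_bip_set_of_sides)
    show "common_nbrs G (P \<inter> A) B \<noteq> {}"
      using sides(3) nbrs(1) by blast
    show "\<forall>a\<in>P \<inter> A. \<forall>b\<in>common_nbrs G (P \<inter> A) B. adj G a b"
      unfolding common_nbrs_def by blast
  qed (use sides(2) sub in blast)+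
  moreover have "P \<subseteq> P \<inter> A \<union> common_nbrs G (P \<inter> A) B"
    using sides(1) nbrs(1) by blast
  ultimately have closed_B: "P \<inter> A \<union> common_nbrs G (P \<inter> A) B = P"
    by (rule maximal)
  have "complete_bip_set G (common_nbrs G (P \<inter> B) A \<union> P \<inter> B)"
  proof (rule complete_bip_set_of_sides)
    show "common_nbrs G (P \<inter> B) A \<noteq> {}"
      using sides(2) nbrs(2) by blast
    show "\<forall>a\<in>common_nbrs G (P \<inter> B) A. \<forall>b\<in>P \<inter> B. adj G a b"
      unfolding common_nbrs_def using adj_sym by blast
  qed (use sides(3) sub in blast)+
  moreover have "P \<subseteq> common_nbrs G (P \<inter> B) A \<union> P \<inter> B"
    using sides(1) nbrs(2) by blast
  ultimately have closed_A: "common_nbrs G (P \<inter> B) A \<union> P \<inter> B = P"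
    by (rule maximal)
  from closed_A closed_B show "P \<subseteq> A \<union> B \<and> P \<inter> A \<noteq> {} \<and> P \<inter> B \<noteq> {}
     \<and> P \<inter> B = common_nbrs G (P \<inter> A) B \<and> P \<inter> A = common_nbrs G (P \<inter> B) A"
    using sides sub[of _ A] sub[of _ B] sides_disjoint by blast
next
  assume P: "P \<subseteq> A \<union> B \<and> P \<inter> A \<noteq> {} \<and> P \<inter> B \<noteq> {}
     \<and> P \<inter> B = common_nbrs G (P \<inter> A) B \<and> P \<inter> A = common_nbrs G (P \<inter> B) A"
  have "\<forall>a\<in>P \<inter> A. \<forall>b\<in>P \<inter> B. adj G a b"
    using P unfolding common_nbrs_def by blast
  then have "complete_bip_set G (P \<inter> A \<union> P \<inter> B)"
    using P by (intro complete_bip_set_of_sides) blast+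
  moreover have "P \<inter> A \<union> P \<inter> B = P"
    using P by blast
  moreover have "Q \<subseteq> P" if "complete_bip_set G Q" "P \<subseteq> Q" for Q
  proof -
    have "Q \<inter> B \<subseteq> P \<inter> B" "Q \<inter> A \<subseteq> P \<inter> A"
      using complete_bip_set_common_nbrs[OF that(1)] common_nbrs_antimono[of "P \<inter> _" "Q \<inter> _"] P that(2)
      by blast+
    then show ?thesis
      using complete_bip_set_sides(1)[OF that(1)] by blast
  qed
  ultimately show "biclique G P"
    unfolding biclique_def by auto
qed

lemma biclique_sides:
  assumes "biclique G P"
  shows "P \<subseteq> A \<union> B" "P \<inter> A \<noteq> {}" "P \<inter> B \<noteq> {}"
    "P \<inter> B = common_nbrs G (P \<inter> A) B" "P \<inter> A = common_nbrs G (P \<inter> B) A"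
  using assms unfolding biclique_iff by blast+

lemma biclique_sides_antimono:
  assumes "biclique G P" "biclique G Q" "P \<inter> A \<subseteq> Q \<inter> A"
  shows "Q \<inter> B \<subseteq> P \<inter> B"
proof -
  have "Q \<inter> B = common_nbrs G (Q \<inter> A) B"
    using assms(2) by (rule biclique_sides)
  also have "\<dots> \<subseteq> common_nbrs G (P \<inter> A) B"
    using assms(3) by (rule common_nbrs_antimono)
  also have "\<dots> = P \<inter> B"
    using assms(1) by (rule biclique_sides(4)[symmetric])
  finally show ?thesis .
qed

lemma biclique_side_subset_iff:
  assumes "biclique G P" "biclique G Q"
  shows "P \<inter> A \<subseteq> Q \<inter> A \<longleftrightarrow> Q \<inter> B \<subseteq> P \<inter> B"
  using biclique_sides_antimono[OF assms] bipartite_graph.biclique_sides_antimono[OF swap assms(2,1)]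
  by blast

lemma biclique_eqI:
  assumes "biclique G P" "biclique G Q" "P \<inter> A = Q \<inter> A"
  shows "P = Q"
proof -
  have "P \<inter> B = Q \<inter> B"
    using biclique_sides(4)[OF assms(1)] biclique_sides(4)[OF assms(2)] assms(3) by simp
  then show ?thesis
    using biclique_sides(1)[OF assms(1)] biclique_sides(1)[OF assms(2)] assms(3) by blast
qed

lemma finite_bicliques: "finite {P. biclique G P}"
proof (rule finite_subset)
  show "{P. biclique G P} \<subseteq> Pow (verts G)"
    unfolding biclique_def complete_bip_set_def by blast
  show "finite (Pow (verts G))"
    using wf unfolding wf_graph_def by simp
qed

text \<open>An intersection of closed sets of the common-neighbourhood Galois connection is closed.\<close>
lemma biclique_meet:
  assumes P: "biclique G P" and Q: "biclique G Q" and meet: "P \<inter> Q \<inter> A \<noteq> {}"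
  obtains M where "biclique G M" "M \<inter> A = P \<inter> Q \<inter> A"
proof -
  define S where "S = P \<inter> Q \<inter> A"
  define T where "T = common_nbrs G S B"
  have "S = common_nbrs G (P \<inter> B) A \<inter> common_nbrs G (Q \<inter> B) A"
    using biclique_sides(5)[OF P] biclique_sides(5)[OF Q] unfolding S_def by blast
  then have S_closed: "S = common_nbrs G (P \<inter> B \<union> Q \<inter> B) A"
    by (simp only: common_nbrs_Un)
  have "P \<inter> B \<subseteq> T"
    unfolding biclique_sides(4)[OF P] T_def S_def by (rule common_nbrs_antimono) blast
  then have "T \<noteq> {}"
    using biclique_sides(3)[OF P] by blast
  have "T \<subseteq> B" "S \<subseteq> A"
    unfolding T_def S_def common_nbrs_def by blast+
  then have sides: "(S \<union> T) \<inter> A = S" "(S \<union> T) \<inter> B = T"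
    using sides_disjoint by blast+
  have "S = common_nbrs G T A"
    unfolding T_def S_closed by (rule common_nbrs_triple[symmetric]) blast
  then have "biclique G (S \<union> T)"
    unfolding biclique_iff sides using \<open>T \<subseteq> B\<close> \<open>S \<subseteq> A\<close> \<open>T \<noteq> {}\<close> meet
    unfolding T_def S_def by blast
  then show thesis
    using sides(1) unfolding S_def by (rule that)
qed

lemma side_order_swap: "side_order G B = (\<lambda>P Q. side_order G A Q P)"
  unfolding side_order_def fun_eq_iff using biclique_side_subset_iff by blast

lemma finite_poset_side_order: "finite_poset {P. biclique G P} (side_order G A)"
  unfolding finite_poset_def side_order_def
  using finite_bicliques biclique_eqI by blast

lemma down_int_side_order:
  "down_int {P. biclique G P} (side_order G A) P = {R. biclique G R \<and> biclique G P \<and> R \<inter> A \<subseteq> P \<inter> A}"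
  unfolding down_int_def side_order_def by blast

lemma biclique_Int_side_iff:
  assumes P: "biclique G P" and Q: "biclique G Q"
  shows "P \<inter> Q \<inter> A \<noteq> {} \<longleftrightarrow>
    down_int {P. biclique G P} (side_order G A) P \<inter> down_int {P. biclique G P} (side_order G A) Q \<noteq> {}"
proof
  assume "P \<inter> Q \<inter> A \<noteq> {}"
  then obtain M where "biclique G M" "M \<inter> A = P \<inter> Q \<inter> A"
    by (rule biclique_meet[OF P Q])
  then show "down_int {P. biclique G P} (side_order G A) P \<inter> down_int {P. biclique G P} (side_order G A) Q \<noteq> {}"
    using P Q unfolding down_int_side_order by blast
next
  assume "down_int {P. biclique G P} (side_order G A) P \<inter> down_int {P. biclique G P} (side_order G A) Q \<noteq> {}"
  then obtain R where "biclique G R" "R \<inter> A \<subseteq> P \<inter> Q \<inter> A"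
    unfolding down_int_side_order by blast
  then show "P \<inter> Q \<inter> A \<noteq> {}"
    using biclique_sides(2) by blast
qed

lemma has_down_meets_side_order: "has_down_meets {P. biclique G P} (side_order G A)"
  unfolding has_down_meets_def
proof (intro ballI impI)
  fix P Q assume "P \<in> {P. biclique G P}" "Q \<in> {P. biclique G P}"
  then have P: "biclique G P" and Q: "biclique G Q" by simp_all
  assume "down_int {P. biclique G P} (side_order G A) P \<inter> down_int {P. biclique G P} (side_order G A) Q \<noteq> {}"
  then have "P \<inter> Q \<inter> A \<noteq> {}"
    unfolding biclique_Int_side_iff[OF P Q] .
  then obtain M where M: "biclique G M" "M \<inter> A = P \<inter> Q \<inter> A"
    by (rule biclique_meet[OF P Q])
  then have "down_int {P. biclique G P} (side_order G A) M
      = down_int {P. biclique G P} (side_order G A) P \<inter> down_int {P. biclique G P} (side_order G A) Q"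
    using P Q unfolding down_int_side_order by blast
  with M(1) show "\<exists>w\<in>{P. biclique G P}. down_int {P. biclique G P} (side_order G A) w
      = down_int {P. biclique G P} (side_order G A) P \<inter> down_int {P. biclique G P} (side_order G A) Q"
    by blast
qed

lemma IIC_side_order: "IIC {P. biclique G P} (side_order G A)"
  using has_down_meets_side_order bipartite_graph.has_down_meets_side_order[OF swap]
  unfolding IIC_iff_has_down_meets side_order_swap by blast

text \<open>A common vertex lies in \<open>A\<close> or in \<open>B\<close>; in the order of \<open>A\<close>-sides these two cases are a
  common lower bound and, since the order of \<open>B\<close>-sides is its converse, a common upper bound.\<close>
lemma graph_iso_KB_square_side_order:
  "graph_iso (KB G) (square (comparability_graph {P. biclique G P} (side_order G A)))"
  unfolding graph_iso_def
proof (intro exI[of _ id] conjI ballI)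
  show "bij_betw id (verts (KB G)) (verts (square (comparability_graph {P. biclique G P} (side_order G A))))"
    by (simp add: verts_KB)
  fix P Q assume "P \<in> verts (KB G)" "Q \<in> verts (KB G)"
  then have P: "biclique G P" and Q: "biclique G Q"
    by (simp_all add: verts_KB)
  have "P \<inter> Q \<noteq> {} \<longleftrightarrow> P \<inter> Q \<inter> A \<noteq> {} \<or> P \<inter> Q \<inter> B \<noteq> {}"
    using biclique_sides(1)[OF P] by blast
  also have "\<dots> \<longleftrightarrow>
      down_int {P. biclique G P} (side_order G A) P \<inter> down_int {P. biclique G P} (side_order G A) Q \<noteq> {} \<or>
      up_int {P. biclique G P} (side_order G A) P \<inter> up_int {P. biclique G P} (side_order G A) Q \<noteq> {}"
    unfolding up_int_eq_down_int_converse side_order_swap[symmetric]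
    using biclique_Int_side_iff[OF P Q] bipartite_graph.biclique_Int_side_iff[OF swap P Q] by blast
  finally show "adj (KB G) P Q \<longleftrightarrow>
      adj (square (comparability_graph {P. biclique G P} (side_order G A))) (id P) (id Q)"
    using P Q by (simp add: adj_KB adj_square_comparability_graph[OF finite_poset_side_order])
qed

end

lemma graph_iso_KB_bipartite_square_IIC_comparability:
  assumes "wf_graph G" and "bipartite G"
  obtains H :: "nat ugraph"
  where "wf_graph H" "IIC_comparability H" "graph_iso (KB G) (square H)"
proof -
  obtain A B where "bipartite_graph G A B"
    using assms unfolding bipartite_def bipartite_graph_def by blast
  then interpret bipartite_graph G A B .
  obtain H :: "nat ugraph" where H: "wf_graph H" "IIC_comparability H"
    and iso: "graph_iso (comparability_graph {P. biclique G P} (side_order G A)) H"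
    using finite_poset_side_order IIC_side_order by (rule IIC_comparability_graph_on_nat)
  have "graph_iso (KB G) (square H)"
    using graph_iso_KB_square_side_order graph_iso_square[OF iso] by (rule graph_iso_trans)
  with H show thesis
    by (rule that)
qed

section \<open>The bipartite graph of an IIC poset\<close>

text \<open>Vertex \<open>2 * c\<close> is the lower copy of \<open>c\<close> and \<open>2 * c + 1\<close> its upper copy; the lower copy of
  \<open>a\<close> is adjacent to the upper copy of \<open>b\<close> iff \<open>a \<le> b\<close>.\<close>
definition poset_bigraph :: "nat set \<Rightarrow> (nat \<Rightarrow> nat \<Rightarrow> bool) \<Rightarrow> nat ugraph" where
  "poset_bigraph C le = ((\<lambda>c. 2 * c) ` C \<union> (\<lambda>c. Suc (2 * c)) ` C,
     {(2 * a, Suc (2 * b)) | a b. le a b} \<union> {(Suc (2 * b), 2 * a) | a b. le a b})"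

lemma verts_poset_bigraph: "verts (poset_bigraph C le) = (\<lambda>c. 2 * c) ` C \<union> (\<lambda>c. Suc (2 * c)) ` C"
  by (simp add: poset_bigraph_def verts_def)

lemma adj_poset_bigraph:
  "adj (poset_bigraph C le) x y \<longleftrightarrow>
    (\<exists>a b. le a b \<and> (x = 2 * a \<and> y = Suc (2 * b) \<or> x = Suc (2 * b) \<and> y = 2 * a))"
  by (auto simp: poset_bigraph_def adj_def edges_def)

lemma double_neq_Suc_double [simp]: "2 * (a::nat) \<noteq> Suc (2 * b)" "Suc (2 * b) \<noteq> 2 * (a::nat)"
  by presburger+

locale IIC_poset =
  fixes C :: "nat set" and le :: "nat \<Rightarrow> nat \<Rightarrow> bool"
  assumes finite_poset: "finite_poset C le" and IIC: "IIC C le"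
begin

abbreviation "lower \<equiv> (\<lambda>c::nat. 2 * c) ` C"
abbreviation "upper \<equiv> (\<lambda>c::nat. Suc (2 * c)) ` C"

lemma finite_carrier: "finite C" and le_in_carrier: "le x y \<Longrightarrow> x \<in> C \<and> y \<in> C"
  and poset_refl: "x \<in> C \<Longrightarrow> le x x" and poset_antisym: "le x y \<Longrightarrow> le y x \<Longrightarrow> x = y"
  and poset_trans: "le x y \<Longrightarrow> le y z \<Longrightarrow> le x z"
  using finite_poset unfolding finite_poset_def by blast+

lemma bipartite_graph_poset_bigraph: "bipartite_graph (poset_bigraph C le) lower upper"
proof
  show "wf_graph (poset_bigraph C le)"
    unfolding wf_graph_def
  proof (intro conjI allI impI)
    show "finite (verts (poset_bigraph C le))"
      using finite_carrier by (simp add: verts_poset_bigraph)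
    show "edges (poset_bigraph C le) \<subseteq> verts (poset_bigraph C le) \<times> verts (poset_bigraph C le)"
      using le_in_carrier by (auto simp: poset_bigraph_def edges_def verts_def)
  qed (auto simp: adj_poset_bigraph)
  show "lower \<inter> upper = {}"
    by auto
  show "lower \<union> upper = verts (poset_bigraph C le)"
    by (simp add: verts_poset_bigraph)
  show "adj (poset_bigraph C le) x y \<Longrightarrow> x \<in> lower \<and> y \<in> upper \<or> x \<in> upper \<and> y \<in> lower" for x y
    using le_in_carrier by (auto simp: adj_poset_bigraph)
qed

sublocale bigraph: bipartite_graph "poset_bigraph C le" lower upper
  by (rule bipartite_graph_poset_bigraph)

lemma common_nbrs_lower:
  "common_nbrs (poset_bigraph C le) ((\<lambda>c. 2 * c) ` D) upper = (\<lambda>c. Suc (2 * c)) ` {b \<in> C. \<forall>a\<in>D. le a b}"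
  unfolding common_nbrs_def by (auto simp: adj_poset_bigraph)

lemma common_nbrs_upper:
  "common_nbrs (poset_bigraph C le) ((\<lambda>c. Suc (2 * c)) ` D) lower = (\<lambda>c. 2 * c) ` {a \<in> C. \<forall>b\<in>D. le a b}"
  unfolding common_nbrs_def by (auto simp: adj_poset_bigraph)

lemma upper_bounds_down_int: "c \<in> C \<Longrightarrow> {b \<in> C. \<forall>a\<in>down_int C le c. le a b} = up_int C le c"
  unfolding down_int_def up_int_def using poset_refl poset_trans by blast

lemma lower_bounds_up_int: "c \<in> C \<Longrightarrow> {a \<in> C. \<forall>b\<in>up_int C le c. le a b} = down_int C le c"
  unfolding down_int_def up_int_def using poset_refl poset_trans by blast

definition principal_biclique :: "nat \<Rightarrow> nat set" where
  "principal_biclique c = (\<lambda>c. 2 * c) ` down_int C le c \<union> (\<lambda>c. Suc (2 * c)) ` up_int C le c"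

lemma principal_biclique_lower: "principal_biclique c \<inter> lower = (\<lambda>c. 2 * c) ` down_int C le c"
  unfolding principal_biclique_def down_int_def up_int_def by auto

lemma principal_biclique_upper: "principal_biclique c \<inter> upper = (\<lambda>c. Suc (2 * c)) ` up_int C le c"
  unfolding principal_biclique_def down_int_def up_int_def by auto

lemma biclique_principal_biclique:
  assumes "c \<in> C"
  shows "biclique (poset_bigraph C le) (principal_biclique c)"
  unfolding bigraph.biclique_iff principal_biclique_lower principal_biclique_upper
    common_nbrs_lower common_nbrs_upper upper_bounds_down_int[OF assms] lower_bounds_up_int[OF assms]
proof (intro conjI)
  show "principal_biclique c \<subseteq> lower \<union> upper"
    unfolding principal_biclique_def down_int_def up_int_def by blast
  have "c \<in> down_int C le c" "c \<in> up_int C le c"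
    using assms poset_refl by (simp_all add: down_int_def up_int_def)
  then show "(\<lambda>c. 2 * c) ` down_int C le c \<noteq> {}" "(\<lambda>c. Suc (2 * c)) ` up_int C le c \<noteq> {}"
    by blast+
qed simp_all

text \<open>Every biclique is principal: its lower side is the set of common lower bounds of the
  finitely many elements of its upper side, which by the interval intersection property is a
  principal down-set.\<close>
lemma biclique_imp_principal:
  assumes P: "biclique (poset_bigraph C le) P"
  obtains w where "w \<in> C" "P = principal_biclique w"
proof -
  define T where "T = {b \<in> C. Suc (2 * b) \<in> P}"
  have P_upper: "P \<inter> upper = (\<lambda>c. Suc (2 * c)) ` T"
    unfolding T_def by auto
  have P_lower: "P \<inter> lower = (\<lambda>c. 2 * c) ` {a \<in> C. \<forall>b\<in>T. le a b}"
    using bigraph.biclique_sides(5)[OF P] unfolding P_upper common_nbrs_upper .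
  have "has_down_meets C le"
    using IIC unfolding IIC_iff_has_down_meets by blast
  moreover have "T \<subseteq> C"
    unfolding T_def by blast
  moreover from this have "finite T"
    using finite_carrier by (rule finite_subset)
  moreover have "T \<noteq> {}"
    using bigraph.biclique_sides(3)[OF P] unfolding P_upper by blast
  moreover have "{a \<in> C. \<forall>b\<in>T. le a b} \<noteq> {}"
    using bigraph.biclique_sides(2)[OF P] unfolding P_lower by blast
  ultimately obtain w where w: "w \<in> C" "down_int C le w = {a \<in> C. \<forall>b\<in>T. le a b}"
    by (elim has_down_meets_finite[THEN bexE])
  have "P \<inter> lower = (\<lambda>c. 2 * c) ` down_int C le w"
    unfolding P_lower w(2) ..
  moreover have "P \<inter> upper = (\<lambda>c. Suc (2 * c)) ` up_int C le w"
    using bigraph.biclique_sides(4)[OF P]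
    unfolding calculation common_nbrs_lower upper_bounds_down_int[OF w(1)] .
  moreover have "P = P \<inter> lower \<union> P \<inter> upper"
    using bigraph.biclique_sides(1)[OF P] by blast
  ultimately have "P = principal_biclique w"
    unfolding principal_biclique_def by simp
  with w(1) show thesis
    by (rule that)
qed

lemma inj_on_principal_biclique: "inj_on principal_biclique C"
proof (rule inj_onI)
  fix c d assume c: "c \<in> C" and d: "d \<in> C" and eq: "principal_biclique c = principal_biclique d"
  have "(\<lambda>c::nat. 2 * c) ` down_int C le c = (\<lambda>c. 2 * c) ` down_int C le d"
    using principal_biclique_lower[of c] principal_biclique_lower[of d] eq by simp
  then have "down_int C le c = down_int C le d"
    by (simp add: inj_image_eq_iff inj_def)
  then have "le c d" "le d c"
    using c d poset_refl by (auto simp: down_int_def)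
  then show "c = d"
    by (rule poset_antisym)
qed

lemma principal_biclique_Int:
  "principal_biclique c \<inter> principal_biclique d \<noteq> {} \<longleftrightarrow>
    down_int C le c \<inter> down_int C le d \<noteq> {} \<or> up_int C le c \<inter> up_int C le d \<noteq> {}"
  unfolding principal_biclique_def by auto

lemma graph_iso_square_KB_poset_bigraph:
  "graph_iso (square (comparability_graph C le)) (KB (poset_bigraph C le))"
  unfolding graph_iso_def
proof (intro exI[of _ principal_biclique] conjI ballI)
  have "principal_biclique ` C = {P. biclique (poset_bigraph C le) P}"
    using biclique_principal_biclique biclique_imp_principal by blast
  then show "bij_betw principal_biclique (verts (square (comparability_graph C le))) (verts (KB (poset_bigraph C le)))"
    using inj_on_principal_biclique by (simp add: verts_KB bij_betw_def)
  fix c d assume "c \<in> verts (square (comparability_graph C le))" "d \<in> verts (square (comparability_graph C le))"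
  then have c: "c \<in> C" and d: "d \<in> C"
    by simp_all
  have "principal_biclique c \<noteq> principal_biclique d \<longleftrightarrow> c \<noteq> d"
    using inj_on_principal_biclique c d by (auto dest: inj_onD)
  then show "adj (square (comparability_graph C le)) c d \<longleftrightarrow>
      adj (KB (poset_bigraph C le)) (principal_biclique c) (principal_biclique d)"
    unfolding adj_square_comparability_graph[OF finite_poset c d] adj_KB principal_biclique_Int
    using biclique_principal_biclique[OF c] biclique_principal_biclique[OF d] by blast
qed

end

lemma graph_iso_square_IIC_comparability_KB_bipartite:
  fixes H :: "nat ugraph"
  assumes "IIC_comparability H"
  obtains G :: "nat ugraph"
  where "wf_graph G" "bipartite G" "graph_iso (square H) (KB G)"
proof -
  obtain le where "finite_poset (verts H) le" "IIC (verts H) le"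
    and H: "H = comparability_graph (verts H) le"
    using assms unfolding IIC_comparability_def by blast
  then interpret IIC_poset "verts H" le
    by unfold_locales
  have "wf_graph (poset_bigraph (verts H) le)"
    by (rule bigraph.wf)
  moreover have "bipartite (poset_bigraph (verts H) le)"
    unfolding bipartite_def using bigraph.sides_disjoint bigraph.sides_cover bigraph.adj_sides by blast
  moreover have "graph_iso (square H) (KB (poset_bigraph (verts H) le))"
    using graph_iso_square_KB_poset_bigraph H by simp
  ultimately show thesis
    by (rule that)
qed

theorem corollary6:
  fixes X :: "'a ugraph"
  assumes "wf_graph X"
  shows "(\<exists>G :: nat ugraph. wf_graph G \<and> bipartite G \<and> graph_iso X (KB G))
     \<longleftrightarrow> (\<exists>H :: nat ugraph. wf_graph H \<and> IIC_comparability H \<and> graph_iso X (square H))"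
proof
  assume "\<exists>G :: nat ugraph. wf_graph G \<and> bipartite G \<and> graph_iso X (KB G)"
  then obtain G :: "nat ugraph" where G: "wf_graph G" "bipartite G" and X: "graph_iso X (KB G)"
    by blast
  obtain H :: "nat ugraph" where "wf_graph H" "IIC_comparability H" "graph_iso (KB G) (square H)"
    using G by (rule graph_iso_KB_bipartite_square_IIC_comparability)
  with X show "\<exists>H :: nat ugraph. wf_graph H \<and> IIC_comparability H \<and> graph_iso X (square H)"
    by (blast intro: graph_iso_trans)
next
  assume "\<exists>H :: nat ugraph. wf_graph H \<and> IIC_comparability H \<and> graph_iso X (square H)"
  then obtain H :: "nat ugraph" where H: "IIC_comparability H" and X: "graph_iso X (square H)"
    by blast
  obtain G :: "nat ugraph" where "wf_graph G" "bipartite G" "graph_iso (square H) (KB G)"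
    using H by (rule graph_iso_square_IIC_comparability_KB_bipartite)
  with X show "\<exists>G :: nat ugraph. wf_graph G \<and> bipartite G \<and> graph_iso X (KB G)"
    by (blast intro: graph_iso_trans)
qed

end
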